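(* Let $D = (D_{ij})$ be an $m \times m$ matrix of differences and let $G_n$ be the $m$-block circulant graph on $nm$ vertices with matrix of differences $D$. Setting $\alpha_n = \alpha(G_n)/(nm)$, we have $\lim_{n\to\infty} \alpha_n = \sup_n \alpha_n$.
   Context: An $m\times m$ matrix of differences is a matrix $D=(D_{ij})$ of finite subsets of $\mathbb{Z}$ with $D_{ji} = -D_{ij}$. $G_n$ has vertex set $\{(i,u) : 0 \leq i \leq m-1,\ 0\leq u \leq n-1\}$, and $(i,u)$, $(j,v)$ (possibly equal) are adjacent iff $v-u$ is congruent modulo $n$ to some element of $D_{ij}$. $\alpha(G)$ is the maximum size of an independent set (no two adjacent vertices, no vertex with a loop). *)

theory Defs
  imports Complex_Main "HOL-Number_Theory.Cong"
begin

definition matrix_of_differences :: "nat \<Rightarrow> (nat \<Rightarrow> nat \<Rightarrow> int set) \<Rightarrow> bool" where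
  "matrix_of_differences m D \<longleftrightarrow>
     (\<forall>i<m. \<forall>j<m. finite (D i j) \<and> D j i = uminus ` D i j)"

definition bc_vertices :: "nat \<Rightarrow> nat \<Rightarrow> (nat \<times> nat) set" where
  "bc_vertices m n = {0..<m} \<times> {0..<n}"

definition bc_adj :: "(nat \<Rightarrow> nat \<Rightarrow> int set) \<Rightarrow> nat \<Rightarrow> nat \<times> nat \<Rightarrow> nat \<times> nat \<Rightarrow> bool" where
  "bc_adj D n x y \<longleftrightarrow>
     (\<exists>d\<in>D (fst x) (fst y). [int (snd y) - int (snd x) = d] (mod int n))"

text \<open>Independent set: no two (possibly equal) members are adjacent; in particular no loops.\<close>
definition bc_independent :: "(nat \<Rightarrow> nat \<Rightarrow> int set) \<Rightarrow> nat \<Rightarrow> (nat \<times> nat) set \<Rightarrow> bool" where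
  "bc_independent D n S \<longleftrightarrow> (\<forall>x\<in>S. \<forall>y\<in>S. \<not> bc_adj D n x y)"

definition bc_alpha :: "nat \<Rightarrow> (nat \<Rightarrow> nat \<Rightarrow> int set) \<Rightarrow> nat \<Rightarrow> nat" where
  "bc_alpha m D n = Max (card ` {S. S \<subseteq> bc_vertices m n \<and> bc_independent D n S})"

end

theory Submission
  imports Defs
begin

text \<open>If S is independent in G_n and all differences have absolute value at most M, then the
  q translates S + k n (k < q) together are independent in G_N whenever q n + M \<le> N: two of their
  vertices differ by less than q n, so no difference can wrap around modulo N. Taking
  q = (N - M) div n gives alpha_N \<ge> alpha_n - (M + n)/N for the densities
  alpha_n = bc_density m D n, so every alpha_n is eventually almost reached, while
  alpha_N \<le> sup alpha_n trivially.\<close>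

definition bc_density :: "nat \<Rightarrow> (nat \<Rightarrow> nat \<Rightarrow> int set) \<Rightarrow> nat \<Rightarrow> real" where
  "bc_density m D n = real (bc_alpha m D n) / (real n * real m)"

definition differences_bounded :: "nat \<Rightarrow> (nat \<Rightarrow> nat \<Rightarrow> int set) \<Rightarrow> nat \<Rightarrow> bool" where
  "differences_bounded m D M \<longleftrightarrow> (\<forall>i<m. \<forall>j<m. \<forall>d\<in>D i j. \<bar>d\<bar> \<le> int M)"

definition bc_repeat :: "nat \<Rightarrow> nat \<Rightarrow> (nat \<times> nat) set \<Rightarrow> (nat \<times> nat) set" where
  "bc_repeat n q S = (\<lambda>((i, u), k). (i, u + k * n)) ` (S \<times> {..<q})"

lemma finite_bc_vertices: "finite (bc_vertices m n)"
  unfolding bc_vertices_def by simp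

lemma card_bc_vertices: "card (bc_vertices m n) = m * n"
  unfolding bc_vertices_def by simp

lemma finite_bc_independent_sets:
  "finite {S. S \<subseteq> bc_vertices m n \<and> bc_independent D n S}"
  using finite_bc_vertices by (rule rev_finite_subset[OF finite_Collect_subsets]) auto

lemma card_le_bc_alpha:
  assumes "S \<subseteq> bc_vertices m n" and "bc_independent D n S"
  shows "card S \<le> bc_alpha m D n"
  unfolding bc_alpha_def using finite_bc_independent_sets assms by (intro Max_ge) auto

lemma bc_alpha_attained:
  obtains S where "S \<subseteq> bc_vertices m n" "bc_independent D n S" "card S = bc_alpha m D n"
proof -
  have "{} \<in> {S. S \<subseteq> bc_vertices m n \<and> bc_independent D n S}"
    by (simp add: bc_independent_def)
  then have "bc_alpha m D n \<in> card ` {S. S \<subseteq> bc_vertices m n \<and> bc_independent D n S}"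
    unfolding bc_alpha_def using finite_bc_independent_sets by (intro Max_in) auto
  then show ?thesis using that by auto
qed

lemma bc_alpha_le: "bc_alpha m D n \<le> m * n"
proof -
  obtain S where "S \<subseteq> bc_vertices m n" "card S = bc_alpha m D n"
    using bc_alpha_attained by metis
  then show ?thesis
    using card_mono[OF finite_bc_vertices] card_bc_vertices by metis
qed

lemma bc_density_nonneg: "0 \<le> bc_density m D n"
  unfolding bc_density_def by simp

lemma bc_density_le_one: "bc_density m D n \<le> 1"
proof -
  have "real (bc_alpha m D n) \<le> real n * real m"
    using bc_alpha_le[of m D n] by (simp add: mult.commute flip: of_nat_mult)
  then show ?thesis
    unfolding bc_density_def by (cases "real n * real m = 0") simp_all
qed

lemma matrix_of_differences_bounded:
  assumes "matrix_of_differences m D"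
  obtains M where "differences_bounded m D M"
proof -
  define A where "A = (\<Union>i<m. \<Union>j<m. D i j)"
  \<comment> \<open>not simp: the symmetry condition loops as a rewrite rule\<close>
  have "\<forall>i<m. \<forall>j<m. finite (D i j)"
    using assms unfolding matrix_of_differences_def by blast
  then have "finite A"
    unfolding A_def by simp
  show ?thesis
  proof (rule that[of "nat (Max (abs ` A))"], unfold differences_bounded_def, intro allI impI ballI)
    fix i j d assume "i < m" "j < m" "d \<in> D i j"
    then have "\<bar>d\<bar> \<le> Max (abs ` A)"
      using \<open>finite A\<close> unfolding A_def by (intro Max_ge) auto
    then show "\<bar>d\<bar> \<le> int (nat (Max (abs ` A)))" by linarith
  qed
qed

lemma cong_int_eq_if_abs_diff_less:
  fixes a b N :: int
  assumes "[a = b] (mod N)" and "\<bar>a - b\<bar> < N"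
  shows "a = b"
proof (rule ccontr)
  assume "a \<noteq> b"
  moreover have "N dvd a - b"
    using assms(1) by (simp add: cong_iff_dvd_diff)
  ultimately have "\<bar>N\<bar> \<le> \<bar>a - b\<bar>"
    by (intro dvd_imp_le_int) simp_all
  then show False using assms(2) by simp
qed

lemma bc_repeat_subset:
  assumes "S \<subseteq> bc_vertices m n"
  shows "bc_repeat n q S \<subseteq> bc_vertices m (q * n)"
proof
  fix x assume "x \<in> bc_repeat n q S"
  then obtain i u k where x: "x = (i, u + k * n)" and "(i, u) \<in> S" and "k < q"
    unfolding bc_repeat_def by auto
  then have "i < m" and "u < n"
    using assms unfolding bc_vertices_def by auto
  have "u + k * n < Suc k * n" using \<open>u < n\<close> by simp
  also have "\<dots> \<le> q * n" using \<open>k < q\<close> by (intro mult_right_mono) simp_all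
  finally show "x \<in> bc_vertices m (q * n)"
    using x \<open>i < m\<close> unfolding bc_vertices_def by simp
qed

lemma card_bc_repeat:
  assumes "S \<subseteq> bc_vertices m n"
  shows "card (bc_repeat n q S) = q * card S"
proof -
  have "inj_on (\<lambda>((i, u), k). (i, u + k * n)) (S \<times> {..<q})"
  proof (rule inj_onI, clarsimp)
    fix i u k v l
    assume "(i, u) \<in> S" "(i, v) \<in> S" and eq: "u + k * n = v + l * n"
    then have "u < n" "v < n"
      using assms unfolding bc_vertices_def by auto
    then show "u = v \<and> k = l"
      using arg_cong[OF eq, of "\<lambda>w. w mod n"] arg_cong[OF eq, of "\<lambda>w. w div n"] by simp
  qed
  then show ?thesis
    unfolding bc_repeat_def by (simp add: card_image card_cartesian_product)
qed

lemma bc_independent_repeat: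
  assumes S: "S \<subseteq> bc_vertices m n" "bc_independent D n S"
    and bound: "differences_bounded m D M"
    and N: "q * n + M \<le> N"
  shows "bc_independent D N (bc_repeat n q S)"
  unfolding bc_independent_def
proof (intro ballI notI)
  fix x y assume "x \<in> bc_repeat n q S" "y \<in> bc_repeat n q S" and "bc_adj D N x y"
  then obtain i u k j v l where x: "x = (i, u + k * n)" "(i, u) \<in> S"
    and y: "y = (j, v + l * n)" "(j, v) \<in> S"
    unfolding bc_repeat_def by auto
  have "i < m" "j < m"
    using x y S(1) unfolding bc_vertices_def by auto
  obtain d where d: "d \<in> D i j" and cong: "[int (v + l * n) - int (u + k * n) = d] (mod int N)"
    using \<open>bc_adj D N x y\<close> x y unfolding bc_adj_def by auto
  have "\<bar>int (v + l * n) - int (u + k * n) - d\<bar> < int N"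
  proof -
    have "x \<in> bc_vertices m (q * n)" "y \<in> bc_vertices m (q * n)"
      using bc_repeat_subset[OF S(1)] \<open>x \<in> _\<close> \<open>y \<in> _\<close> by auto
    then have "u + k * n < q * n" "v + l * n < q * n"
      using x y unfolding bc_vertices_def by auto
    moreover have "\<bar>d\<bar> \<le> int M"
      using bound \<open>i < m\<close> \<open>j < m\<close> d unfolding differences_bounded_def by blast
    ultimately show ?thesis using N by linarith
  qed
  with cong have "int (v + l * n) - int (u + k * n) = d"
    by (rule cong_int_eq_if_abs_diff_less)
  then have "int v - int u - d = int n * (int k - int l)"
    by (simp add: algebra_simps)
  then have "[int v - int u = d] (mod int n)"
    unfolding cong_iff_dvd_diff by simp
  then have "bc_adj D n (i, u) (j, v)"
    unfolding bc_adj_def using d by auto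
  then show False
    using S(2) x y unfolding bc_independent_def by blast
qed

lemma mult_bc_alpha_le:
  assumes bound: "differences_bounded m D M"
    and N: "q * n + M \<le> N"
  shows "q * bc_alpha m D n \<le> bc_alpha m D N"
proof -
  obtain S where S: "S \<subseteq> bc_vertices m n" "bc_independent D n S" "card S = bc_alpha m D n"
    using bc_alpha_attained by metis
  have "bc_vertices m (q * n) \<subseteq> bc_vertices m N"
    using N unfolding bc_vertices_def by auto
  then have "card (bc_repeat n q S) \<le> bc_alpha m D N"
    using bc_repeat_subset[OF S(1)] bc_independent_repeat[OF S(1,2) bound N]
    by (intro card_le_bc_alpha) auto
  then show ?thesis
    using card_bc_repeat[OF S(1)] S(3) by simp
qed

lemma bc_density_lower_bound:
  assumes bound: "differences_bounded m D M"
    and "n \<ge> 1" and "m \<ge> 1" and N: "N \<ge> M + n"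
  shows "bc_density m D n - real (M + n) / real N \<le> bc_density m D N"
proof -
  define q where "q = (N - M) div n"
  define x where "x = bc_density m D n"
  have "q * n + (N - M) mod n = N - M"
    unfolding q_def by (rule div_mult_mod_eq)
  moreover have "(N - M) mod n < n"
    using \<open>n \<ge> 1\<close> by simp
  ultimately have qn: "q * n + M \<le> N" and "N \<le> q * n + (M + n)"
    using N by linarith+
  then have qn_real: "real N - real (M + n) \<le> real q * real n"
    by (metis add.commute diff_le_eq of_nat_add of_nat_le_iff of_nat_mult)
  have N_pos: "real N > 0" and "real n > 0" and "real m > 0"
    using assms by simp_all
  have x_bounds: "0 \<le> x" "x \<le> 1"
    unfolding x_def by (rule bc_density_nonneg, rule bc_density_le_one)
  have "x - real (M + n) / real N \<le> x - x * real (M + n) / real N"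
    using x_bounds N_pos by (intro diff_left_mono divide_right_mono mult_left_le_one_le) simp_all
  also have "\<dots> = x * (real N - real (M + n)) / real N"
    using N_pos by (simp add: field_simps)
  also have "\<dots> \<le> x * (real q * real n) / real N"
    using qn_real x_bounds N_pos by (intro divide_right_mono mult_left_mono) simp_all
  also have "\<dots> = real (q * bc_alpha m D n) / (real N * real m)"
    using \<open>real n > 0\<close> \<open>real m > 0\<close> unfolding x_def bc_density_def by (simp add: field_simps)
  also have "\<dots> \<le> bc_density m D N"
    unfolding bc_density_def using mult_bc_alpha_le[OF bound qn]
    by (intro divide_right_mono) (simp_all del: of_nat_mult)
  finally show ?thesis unfolding x_def .
qed

lemma LIMSEQ_SUP_if_eventually_almost_ge:
  fixes a c :: "nat \<Rightarrow> real"
  assumes bdd: "bdd_above (a ` {1..})"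
    and almost_ge: "\<And>n. n \<ge> 1 \<Longrightarrow> \<forall>\<^sub>F N in sequentially. a n - c n / real N \<le> a N"
  shows "a \<longlonglongrightarrow> (SUP n\<in>{1..}. a n)"
proof (rule order_tendstoI)
  fix y assume "y < (SUP n\<in>{1..}. a n)"
  then obtain n where "n \<ge> 1" "y < a n"
    using less_cSUP_iff[OF _ bdd] by auto
  then have "\<forall>\<^sub>F N in sequentially. y < a n - c n / real N"
    by (intro order_tendstoD(1)) (auto intro!: tendsto_eq_intros)
  with almost_ge[OF \<open>n \<ge> 1\<close>] show "\<forall>\<^sub>F N in sequentially. y < a N"
    by eventually_elim simp
next
  fix y assume "(SUP n\<in>{1..}. a n) < y"
  moreover have "a N \<le> (SUP n\<in>{1..}. a n)" if "N \<ge> 1" for N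
    using bdd that by (intro cSUP_upper) auto
  ultimately show "\<forall>\<^sub>F N in sequentially. a N < y"
    by (intro eventually_mono[OF eventually_ge_at_top[of 1]]) fastforce
qed

theorem theorem8:
  fixes m :: nat and D :: "nat \<Rightarrow> nat \<Rightarrow> int set"
  assumes "m \<ge> 1" and "matrix_of_differences m D"
  shows "(\<lambda>n. real (bc_alpha m D n) / (real n * real m)) \<longlonglongrightarrow>
           (SUP n\<in>{1..}. real (bc_alpha m D n) / (real n * real m))"
proof -
  obtain M where bound: "differences_bounded m D M"
    using matrix_of_differences_bounded[OF assms(2)] by metis
  have "bdd_above (bc_density m D ` {1..})"
    using bc_density_le_one by (intro bdd_aboveI) auto
  moreover have "\<forall>\<^sub>F N in sequentially.
      bc_density m D n - real (M + n) / real N \<le> bc_density m D N" if "n \<ge> 1" for n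
    using bc_density_lower_bound[OF bound that assms(1)]
    by (intro eventually_mono[OF eventually_ge_at_top[of "M + n"]])
  ultimately have "bc_density m D \<longlonglongrightarrow> (SUP n\<in>{1..}. bc_density m D n)"
    by (rule LIMSEQ_SUP_if_eventually_almost_ge)
  then show ?thesis
    unfolding bc_density_def .
qed

end
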